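(* Let $p\ne q$ be primes, $G=\mathbb{Z}_p^2\times\mathbb{Z}_q^2$, and $A\subseteq G$ with $|A|\ge pq$. Then either $A$ is a tile of $G$ and $|A|=pq$, or for all nonzero $a\in\mathbb{Z}_p^2$ and nonzero $b\in\mathbb{Z}_q^2$ at least one of the directions $[a,0]$, $[0,b]$, $[a,b]$ belongs to $\mathcal{D}(A)$.
   Context: Elements of $G$ are written $(a,b)$ with $a\in\mathbb{Z}_p^2$, $b\in\mathbb{Z}_q^2$. For $v,w\in G$, $v\sim w$ if they generate the same cyclic subgroup; the class of $(a,b)$ is the direction $[a,b]$. $\mathcal{D}(A)$ is the set of directions $[v]$ for which some $w\in A-A$ satisfies $w\sim v$. $A$ is a tile of $G$ if there is $T\subseteq G$ with $A+T=G$ and $|A||T|=|G|$. *)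

theory Defs
  imports "HOL-Computational_Algebra.Primes"
begin

type_synonym gelem = "(nat \<times> nat) \<times> (nat \<times> nat)"

definition Grp :: "nat \<Rightarrow> nat \<Rightarrow> gelem set" where
  "Grp p q = {((a1,a2),(b1,b2)). a1 < p \<and> a2 < p \<and> b1 < q \<and> b2 < q}"

definition gadd :: "nat \<Rightarrow> nat \<Rightarrow> gelem \<Rightarrow> gelem \<Rightarrow> gelem" where
  "gadd p q v w = (case v of ((a1,a2),(b1,b2)) \<Rightarrow> case w of ((c1,c2),(d1,d2)) \<Rightarrow>
     (((a1+c1) mod p, (a2+c2) mod p), ((b1+d1) mod q, (b2+d2) mod q)))"

definition gneg :: "nat \<Rightarrow> nat \<Rightarrow> gelem \<Rightarrow> gelem" where
  "gneg p q v = (case v of ((a1,a2),(b1,b2)) \<Rightarrow>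
     (((p - a1) mod p, (p - a2) mod p), ((q - b1) mod q, (q - b2) mod q)))"

definition gsmul :: "nat \<Rightarrow> nat \<Rightarrow> nat \<Rightarrow> gelem \<Rightarrow> gelem" where
  "gsmul p q k v = (case v of ((a1,a2),(b1,b2)) \<Rightarrow>
     (((k*a1) mod p, (k*a2) mod p), ((k*b1) mod q, (k*b2) mod q)))"

text \<open>Cyclic subgroup generated by v (G is finite, so nonnegative multiples suffice).\<close>
definition cyc :: "nat \<Rightarrow> nat \<Rightarrow> gelem \<Rightarrow> gelem set" where
  "cyc p q v = {gsmul p q k v | k. True}"

definition gequiv :: "nat \<Rightarrow> nat \<Rightarrow> gelem \<Rightarrow> gelem \<Rightarrow> bool" where
  "gequiv p q v w \<longleftrightarrow> cyc p q v = cyc p q w"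

definition diffset :: "nat \<Rightarrow> nat \<Rightarrow> gelem set \<Rightarrow> gelem set" where
  "diffset p q A = {gadd p q x (gneg p q y) | x y. x \<in> A \<and> y \<in> A}"

text \<open>Directions [v] in D(A), represented by their elements v \<in> G.\<close>
definition Dirs :: "nat \<Rightarrow> nat \<Rightarrow> gelem set \<Rightarrow> gelem set" where
  "Dirs p q A = {v \<in> Grp p q. \<exists>w \<in> diffset p q A. gequiv p q w v}"

definition sumset :: "nat \<Rightarrow> nat \<Rightarrow> gelem set \<Rightarrow> gelem set \<Rightarrow> gelem set" where
  "sumset p q A T = {gadd p q a t | a t. a \<in> A \<and> t \<in> T}"

definition is_tile :: "nat \<Rightarrow> nat \<Rightarrow> gelem set \<Rightarrow> bool" where
  "is_tile p q A \<longleftrightarrow> (\<exists>T \<subseteq> Grp p q. sumset p q A T = Grp p q \<and>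
      card A * card T = card (Grp p q))"

end

(* Fix nonzero a in Z_p^2 and b in Z_q^2. The cyclic subgroup H generated by (a, b) has order pq
   and is the kernel of the homomorphism (x, y) |-> (det(a, x), det(b, y)) from G onto Z_p x Z_q.
   A nonzero element m(a, b) of H generates <(a,0)>, <(0,b)> or <(a,b)>, according as q, p or
   neither divides m. So if none of these three directions lies in D(A), no nonzero difference of A
   lies in H, the homomorphism is injective on A and |A| <= pq. When |A| >= pq it is therefore a
   bijection from A onto Z_p x Z_q, i.e. A is a system of coset representatives of H, and A + H = G
   is a tiling. *)

theory Submission
  imports Defs "HOL-Number_Theory.Cong"
begin

lemma coprime_less_prime:
  fixes n c :: nat
  shows "prime n \<Longrightarrow> 0 < c \<Longrightarrow> c < n \<Longrightarrow> coprime c n"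
  by (metis coprime_commute nat_dvd_not_less prime_imp_coprime_nat)

lemma cong_proportional_imp_multiple:
  fixes p a1 a2 z1 z2 :: int
  assumes "prime p" "\<not> (p dvd a1 \<and> p dvd a2)" "[a1 * z2 = a2 * z1] (mod p)"
  shows "\<exists>k. [z1 = k * a1] (mod p) \<and> [z2 = k * a2] (mod p)"
proof -
  have multiple: "\<exists>k. [u = k * b] (mod p) \<and> [v = k * c] (mod p)"
    if "\<not> p dvd b" "[b * v = c * u] (mod p)" for b c u v :: int
  proof -
    have "coprime b p"
      using \<open>prime p\<close> that(1) by (metis prime_imp_coprime coprime_commute)
    then obtain i where i: "[b * i = 1] (mod p)"
      using cong_solve_coprime_int by blast
    have "[u * i * b = u] (mod p)"
      using cong_scalar_left[OF i, of u] by (simp add: ac_simps)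
    moreover have "[b * (u * i * c) = b * v] (mod p)"
    proof -
      have "[b * (u * i * c) = c * u * (b * i)] (mod p)"
        by (simp add: ac_simps)
      also have "[c * u * (b * i) = c * u] (mod p)"
        using cong_scalar_left[OF i, of "c * u"] by simp
      also have "[c * u = b * v] (mod p)"
        using that(2) by (rule cong_sym)
      finally show ?thesis .
    qed
    then have "[u * i * c = v] (mod p)"
      using \<open>coprime b p\<close> cong_mult_lcancel by blast
    ultimately show ?thesis
      by (blast intro: cong_sym)
  qed
  show ?thesis
  proof (cases "p dvd a1")
    case False
    then show ?thesis
      using multiple assms(3) by blast
  next
    case True
    then have "\<not> p dvd a2"
      using assms(2) by blast
    then show ?thesis
      using multiple[where b = a2 and c = a1 and u = z2 and v = z1] assms(3)
      by (auto simp: cong_sym_eq)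
  qed
qed

fun vadd :: "nat \<Rightarrow> nat \<times> nat \<Rightarrow> nat \<times> nat \<Rightarrow> nat \<times> nat" where
  "vadd n (x1, x2) (y1, y2) = ((x1 + y1) mod n, (x2 + y2) mod n)"

fun vneg :: "nat \<Rightarrow> nat \<times> nat \<Rightarrow> nat \<times> nat" where
  "vneg n (x1, x2) = ((n - x1) mod n, (n - x2) mod n)"

fun vsmul :: "nat \<Rightarrow> nat \<Rightarrow> nat \<times> nat \<Rightarrow> nat \<times> nat" where
  "vsmul n k (x1, x2) = ((k * x1) mod n, (k * x2) mod n)"

fun det :: "nat \<Rightarrow> nat \<times> nat \<Rightarrow> nat \<times> nat \<Rightarrow> int" where
  "det n (a1, a2) (x1, x2) = (int a1 * int x2 - int a2 * int x1) mod int n"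

lemma int_add_minus_mod_cong:
  assumes "y \<le> n"
  shows "[int ((x + (n - y) mod n) mod n) = int x - int y] (mod int n)"
proof -
  have "int ((x + (n - y) mod n) mod n) = (int n + (int x - int y)) mod int n"
    using assms by (simp add: of_nat_mod of_nat_diff mod_add_right_eq algebra_simps)
  then show ?thesis
    by (simp add: cong_def)
qed

lemma vadd_vneg_eq_zeroD:
  assumes "x \<in> {..<n} \<times> {..<n}" "y \<in> {..<n} \<times> {..<n}" "vadd n x (vneg n y) = (0, 0)"
  shows "x = y"
proof -
  have eq: "u = v" if "u < n" "v < n" "(u + (n - v) mod n) mod n = 0" for u v
  proof -
    have "[0 = int u - int v] (mod int n)"
      using int_add_minus_mod_cong[of v n u] that by simp
    then have "[u = v] (mod n)"
      using cong_sym cong_diff_iff_cong_0 cong_int_iff by blast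
    then show ?thesis
      using that by (simp add: cong_def)
  qed
  obtain x1 x2 y1 y2 where "x = (x1, x2)" "y = (y1, y2)"
    by (metis prod.exhaust)
  then show ?thesis
    using assms eq[of x1 y1] eq[of x2 y2] by simp
qed

lemma vadd_vadd_vneg:
  assumes "x \<in> {..<n} \<times> {..<n}" "y \<in> {..<n} \<times> {..<n}"
  shows "vadd n x (vadd n y (vneg n x)) = y"
proof -
  have "(u + (v + (n - u) mod n) mod n) mod n = v" if "u < n" "v < n" for u v
  proof -
    have "[int ((v + (n - u) mod n) mod n) = int v - int u] (mod int n)"
      using that by (simp add: int_add_minus_mod_cong)
    then have "[int u + int ((v + (n - u) mod n) mod n) = int u + (int v - int u)] (mod int n)"
      by (rule cong_add[OF cong_refl])
    then have "[u + (v + (n - u) mod n) mod n = v] (mod n)"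
      by (simp flip: cong_int_iff)
    then show ?thesis
      using that by (simp add: cong_def)
  qed
  then show ?thesis
    using assms by (cases x; cases y) auto
qed

lemma vsmul_vsmul: "vsmul n k (vsmul n m x) = vsmul n (k * m) x"
  by (cases x) (simp add: mod_mult_right_eq mult.assoc)

lemma vsmul_cong: "[k = m] (mod n) \<Longrightarrow> vsmul n k x = vsmul n m x"
  by (cases x) (simp add: cong_def mod_mult_left_eq[of k, symmetric] mod_mult_left_eq[of m, symmetric])

lemma vsmul_one: "x \<in> {..<n} \<times> {..<n} \<Longrightarrow> vsmul n 1 x = x"
  by (cases x) simp

lemma vsmul_multiple_of_modulus: "n dvd k \<Longrightarrow> vsmul n k x = (0, 0)"
  by (cases x) simp

lemma vsmul_cancel:
  assumes "prime n" "a \<in> {..<n} \<times> {..<n}" "a \<noteq> (0, 0)" "vsmul n k a = vsmul n m a"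
  shows "[k = m] (mod n)"
proof -
  obtain a1 a2 where a: "a = (a1, a2)"
    by (metis prod.exhaust)
  have cancel: "[k = m] (mod n)" if "[k * c = m * c] (mod n)" "0 < c" "c < n" for c
    using that cong_mult_rcancel_nat coprime_less_prime[OF \<open>prime n\<close>] by blast
  have "[k * a1 = m * a1] (mod n)" "[k * a2 = m * a2] (mod n)"
    using assms(4) by (simp_all add: a cong_def)
  moreover have "0 < a1 \<and> a1 < n \<or> 0 < a2 \<and> a2 < n"
    using assms(2,3) by (auto simp: a)
  ultimately show ?thesis
    using cancel by blast
qed

lemma det_range: "0 < n \<Longrightarrow> det n a x \<in> {0..<int n}"
  by (cases a; cases x) simp

lemma det_eq_imp_proportional:
  assumes "y \<in> {..<n} \<times> {..<n}" "det n (a1, a2) x = det n (a1, a2) y"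
    and "vadd n x (vneg n y) = (d1, d2)"
  shows "[int a1 * int d2 = int a2 * int d1] (mod int n)"
proof -
  obtain x1 x2 y1 y2 where xy: "x = (x1, x2)" "y = (y1, y2)"
    by (metis prod.exhaust)
  have d1: "[int d1 = int x1 - int y1] (mod int n)" and d2: "[int d2 = int x2 - int y2] (mod int n)"
    using assms(1,3) int_add_minus_mod_cong by (auto simp: xy)
  have det: "[int a1 * int x2 - int a2 * int x1 - (int a1 * int y2 - int a2 * int y1) = 0] (mod int n)"
    unfolding cong_diff_iff_cong_0 using assms(2) by (simp add: xy cong_def)
  have "[int a1 * int d2 = int a1 * (int x2 - int y2)] (mod int n)"
    using d2 by (rule cong_scalar_left)
  also have "int a1 * (int x2 - int y2)
      = int a1 * int x2 - int a2 * int x1 - (int a1 * int y2 - int a2 * int y1) + int a2 * (int x1 - int y1)"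
    by (simp add: algebra_simps)
  also have "[\<dots> = 0 + int a2 * (int x1 - int y1)] (mod int n)"
    using det by (rule cong_add[OF _ cong_refl])
  also have "[0 + int a2 * (int x1 - int y1) = int a2 * int d1] (mod int n)"
    using cong_scalar_left[OF d1, of "int a2"] by (simp add: cong_sym_eq)
  finally show ?thesis .
qed

lemma eq_vsmul_if_int_cong:
  assumes "d1 < n" "d2 < n"
    and "[int d1 = k * int a1] (mod int n)" "[int d2 = k * int a2] (mod int n)"
  shows "(d1, d2) = vsmul n (nat (k mod int n)) (a1, a2)"
proof -
  let ?k = "nat (k mod int n)"
  have "[k = int ?k] (mod int n)"
    using assms(1) by (simp add: cong_def)
  have reduce: "u = (?k * c) mod n" if "u < n" "[int u = k * int c] (mod int n)" for u c
  proof -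
    have "[int u = int (?k * c)] (mod int n)"
      using that(2) cong_scalar_right[OF \<open>[k = int ?k] (mod int n)\<close>] by (auto intro: cong_trans)
    then have "[u = ?k * c] (mod n)"
      by (simp only: cong_int_iff)
    then show ?thesis
      using that(1) by (simp add: cong_def)
  qed
  show ?thesis
    using reduce assms by simp
qed

lemma vadd_vneg_eq_vsmul_if_det_eq:
  assumes "prime n" "a \<in> {..<n} \<times> {..<n}" "a \<noteq> (0, 0)"
    and "x \<in> {..<n} \<times> {..<n}" "y \<in> {..<n} \<times> {..<n}" "det n a x = det n a y"
  shows "\<exists>k. vadd n x (vneg n y) = vsmul n k a"
proof -
  obtain a1 a2 d1 d2 where a: "a = (a1, a2)" and d: "vadd n x (vneg n y) = (d1, d2)"
    by (metis prod.exhaust)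
  have "d1 < n" "d2 < n"
    using d \<open>prime n\<close> prime_gt_0_nat by (cases x; cases y; auto)+
  have not_dvd: "\<not> (int n dvd int a1 \<and> int n dvd int a2)"
    using assms(2,3) by (auto simp: a dest: nat_dvd_not_less)
  have proportional: "[int a1 * int d2 = int a2 * int d1] (mod int n)"
    using det_eq_imp_proportional[OF assms(5) _ d] assms(6) by (simp add: a)
  obtain k where "[int d1 = k * int a1] (mod int n)" "[int d2 = k * int a2] (mod int n)"
    using cong_proportional_imp_multiple[OF _ not_dvd proportional] \<open>prime n\<close> by auto
  then show ?thesis
    using eq_vsmul_if_int_cong \<open>d1 < n\<close> \<open>d2 < n\<close> by (metis a d)
qed

lemma Grp_eq: "Grp p q = ({..<p} \<times> {..<p}) \<times> ({..<q} \<times> {..<q})"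
  by (auto simp: Grp_def)

lemma gadd_eq: "gadd p q v w = (vadd p (fst v) (fst w), vadd q (snd v) (snd w))"
  by (simp add: gadd_def split: prod.splits)

lemma gneg_eq: "gneg p q v = (vneg p (fst v), vneg q (snd v))"
  by (simp add: gneg_def split: prod.splits)

lemma gsmul_eq: "gsmul p q k v = (vsmul p k (fst v), vsmul q k (snd v))"
  by (simp add: gsmul_def split: prod.splits)

lemma gadd_in_Grp: "0 < p \<Longrightarrow> 0 < q \<Longrightarrow> gadd p q v w \<in> Grp p q"
  by (simp add: gadd_def Grp_def split: prod.splits)

lemma gsmul_in_Grp: "0 < p \<Longrightarrow> 0 < q \<Longrightarrow> gsmul p q k v \<in> Grp p q"
  by (simp add: gsmul_def Grp_def split: prod.splits)

lemma gadd_gadd_gneg: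
  assumes "x \<in> Grp p q" "y \<in> Grp p q"
  shows "gadd p q x (gadd p q y (gneg p q x)) = y"
proof -
  obtain x1 x2 y1 y2 where "x = (x1, x2)" "y = (y1, y2)"
    by (metis prod.exhaust)
  then show ?thesis
    using assms by (simp add: Grp_eq gadd_eq gneg_eq vadd_vadd_vneg)
qed

lemma gadd_gneg_eq_zeroD:
  assumes "x \<in> Grp p q" "y \<in> Grp p q" "gadd p q x (gneg p q y) = ((0, 0), (0, 0))"
  shows "x = y"
proof -
  obtain x1 x2 y1 y2 where "x = (x1, x2)" "y = (y1, y2)"
    by (metis prod.exhaust)
  then show ?thesis
    using assms vadd_vneg_eq_zeroD[of x1 p y1] vadd_vneg_eq_zeroD[of x2 q y2]
    by (simp add: Grp_eq gadd_eq gneg_eq)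
qed

lemma gsmul_gsmul: "gsmul p q k (gsmul p q m v) = gsmul p q (k * m) v"
  by (simp add: gsmul_eq vsmul_vsmul)

lemma gequivI: "gsmul p q m w = v \<Longrightarrow> gsmul p q k v = w \<Longrightarrow> gequiv p q v w"
  unfolding gequiv_def cyc_def by (metis gsmul_gsmul)

lemma cyc_subset_Grp: "0 < p \<Longrightarrow> 0 < q \<Longrightarrow> cyc p q v \<subseteq> Grp p q"
  by (auto simp: cyc_def gsmul_in_Grp)

lemma inverse_mod_two_primes:
  fixes p q m :: nat
  assumes "prime p" "prime q" "p \<noteq> q"
  shows "\<exists>k. (\<not> p dvd m \<longrightarrow> [k * m = 1] (mod p)) \<and> (\<not> q dvd m \<longrightarrow> [k * m = 1] (mod q))"
proof -
  have inverse: "\<exists>i. \<not> r dvd m \<longrightarrow> [i * m = 1] (mod r)" if "prime r" for r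
  proof (cases "r dvd m")
    case False
    then have "coprime m r"
      using that by (metis prime_imp_coprime_nat coprime_commute)
    then show ?thesis
      using cong_solve_coprime_nat by (metis One_nat_def mult.commute)
  qed simp
  obtain i j where i: "\<not> p dvd m \<longrightarrow> [i * m = 1] (mod p)" and j: "\<not> q dvd m \<longrightarrow> [j * m = 1] (mod q)"
    using inverse assms(1,2) by meson
  obtain k where "[k = i] (mod p)" "[k = j] (mod q)"
    using binary_chinese_remainder_nat assms primes_coprime by blast
  then show ?thesis
    using i j by (meson cong_scalar_right cong_trans)
qed

lemma gsmul_gequiv_support:
  assumes "prime p" "prime q" "p \<noteq> q" "a \<in> {..<p} \<times> {..<p}" "b \<in> {..<q} \<times> {..<q}"
  shows "gequiv p q (gsmul p q m (a, b)) (if p dvd m then (0, 0) else a, if q dvd m then (0, 0) else b)"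
    (is "gequiv p q ?w ?v")
proof -
  obtain k where k: "\<not> p dvd m \<longrightarrow> [k * m = 1] (mod p)" "\<not> q dvd m \<longrightarrow> [k * m = 1] (mod q)"
    using inverse_mod_two_primes assms(1-3) by blast
  have cancel: "vsmul r (k * m) c = (if r dvd m then (0, 0) else c)"
    if "\<not> r dvd m \<longrightarrow> [k * m = 1] (mod r)" "c \<in> {..<r} \<times> {..<r}" for r c
  proof (cases "r dvd m")
    case False
    then show ?thesis
      using that vsmul_cong[of "k * m" 1 r c] vsmul_one[of c r] by simp
  qed (simp add: vsmul_multiple_of_modulus)
  have "gsmul p q m ?v = ?w"
    by (simp add: gsmul_eq vsmul_multiple_of_modulus)
  moreover have "gsmul p q k ?w = ?v"
    using cancel[OF k(1) assms(4)] cancel[OF k(2) assms(5)] by (simp add: gsmul_eq vsmul_vsmul)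
  ultimately show ?thesis
    by (rule gequivI)
qed

definition coset_label :: "nat \<Rightarrow> nat \<Rightarrow> nat \<times> nat \<Rightarrow> nat \<times> nat \<Rightarrow> gelem \<Rightarrow> int \<times> int" where
  "coset_label p q a b v = (det p a (fst v), det q b (snd v))"

lemma coset_label_range:
  "0 < p \<Longrightarrow> 0 < q \<Longrightarrow> coset_label p q a b v \<in> {0..<int p} \<times> {0..<int q}"
  unfolding coset_label_def by (blast intro: det_range)

lemma coset_label_eq_imp_diff_in_cyc:
  assumes "prime p" "prime q" "p \<noteq> q"
    and "a \<in> {..<p} \<times> {..<p}" "a \<noteq> (0, 0)" "b \<in> {..<q} \<times> {..<q}" "b \<noteq> (0, 0)"
    and "x \<in> Grp p q" "y \<in> Grp p q" "coset_label p q a b x = coset_label p q a b y"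
  shows "gadd p q x (gneg p q y) \<in> cyc p q (a, b)"
proof -
  have x: "fst x \<in> {..<p} \<times> {..<p}" "snd x \<in> {..<q} \<times> {..<q}"
    and y: "fst y \<in> {..<p} \<times> {..<p}" "snd y \<in> {..<q} \<times> {..<q}"
    using assms(8,9) unfolding Grp_eq mem_Times_iff by blast+
  have "det p a (fst x) = det p a (fst y)" "det q b (snd x) = det q b (snd y)"
    using assms(10) by (simp_all add: coset_label_def)
  then obtain k l where k: "vadd p (fst x) (vneg p (fst y)) = vsmul p k a"
    and l: "vadd q (snd x) (vneg q (snd y)) = vsmul q l b"
    using vadd_vneg_eq_vsmul_if_det_eq assms(1,2,4-7) x y by meson
  obtain m where "[m = k] (mod p)" "[m = l] (mod q)"
    using binary_chinese_remainder_nat assms(1-3) primes_coprime by blast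
  then have "gadd p q x (gneg p q y) = gsmul p q m (a, b)"
    using k l by (simp add: gadd_eq gneg_eq gsmul_eq vsmul_cong)
  then show ?thesis
    by (auto simp: cyc_def)
qed

lemma card_cyc:
  assumes "prime p" "prime q" "p \<noteq> q"
    and "a \<in> {..<p} \<times> {..<p}" "a \<noteq> (0, 0)" "b \<in> {..<q} \<times> {..<q}" "b \<noteq> (0, 0)"
  shows "card (cyc p q (a, b)) = p * q"
proof -
  let ?f = "\<lambda>m. gsmul p q m (a, b)"
  have "?f m = ?f (m mod (p * q))" for m
  proof -
    have "[m = m mod (p * q)] (mod p * q)"
      by (simp add: cong_def)
    then have "[m = m mod (p * q)] (mod p)" "[m = m mod (p * q)] (mod q)"
      by (metis cong_modulus_mult_nat mult.commute)+
    then show ?thesis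
      by (simp add: gsmul_eq vsmul_cong)
  qed
  moreover have "m mod (p * q) \<in> {..<p * q}" for m
    using assms(1,2) by (simp add: prime_gt_0_nat)
  ultimately have "cyc p q (a, b) \<subseteq> ?f ` {..<p * q}"
    unfolding cyc_def by blast
  then have "cyc p q (a, b) = ?f ` {..<p * q}"
    unfolding cyc_def by blast
  moreover have "inj_on ?f {..<p * q}"
  proof (rule inj_onI)
    fix m m' assume "m \<in> {..<p * q}" "m' \<in> {..<p * q}" "?f m = ?f m'"
    then have "[m = m'] (mod p)" "[m = m'] (mod q)"
      using vsmul_cancel assms by (auto simp: gsmul_eq)
    then have "[m = m'] (mod p * q)"
      using coprime_cong_mult_nat assms(1-3) primes_coprime by blast
    then show "m = m'"
      using \<open>m \<in> {..<p * q}\<close> \<open>m' \<in> {..<p * q}\<close> cong_less_modulus_unique_nat by auto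
  qed
  ultimately show ?thesis
    by (simp add: card_image)
qed

lemma inj_on_coset_label:
  assumes "prime p" "prime q" "p \<noteq> q" "A \<subseteq> Grp p q"
    and "a \<in> {..<p} \<times> {..<p}" "a \<noteq> (0, 0)" "b \<in> {..<q} \<times> {..<q}" "b \<noteq> (0, 0)"
    and "(a, (0, 0)) \<notin> Dirs p q A" "((0, 0), b) \<notin> Dirs p q A" "(a, b) \<notin> Dirs p q A"
  shows "inj_on (coset_label p q a b) A"
proof (rule inj_onI)
  fix x y assume "x \<in> A" "y \<in> A" and label: "coset_label p q a b x = coset_label p q a b y"
  let ?d = "gadd p q x (gneg p q y)"
  have "?d \<in> diffset p q A"
    using \<open>x \<in> A\<close> \<open>y \<in> A\<close> unfolding diffset_def by blast
  obtain m where m: "?d = gsmul p q m (a, b)"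
    using coset_label_eq_imp_diff_in_cyc[OF assms(1-3,5-8) _ _ label] \<open>x \<in> A\<close> \<open>y \<in> A\<close> assms(4)
    by (auto simp: cyc_def)
  define v where "v = (if p dvd m then (0, 0) else a, if q dvd m then (0, 0) else b)"
  have "gequiv p q ?d v"
    unfolding m v_def using gsmul_gequiv_support assms(1-3,5,7) by blast
  moreover have "v \<in> Grp p q"
    using assms(5,7) by (auto simp: v_def Grp_eq)
  ultimately have "v \<in> Dirs p q A"
    using \<open>?d \<in> diffset p q A\<close> by (auto simp: Dirs_def)
  then have "p dvd m \<and> q dvd m"
    using assms(9-11) by (auto simp: v_def split: if_splits)
  then have "?d = ((0, 0), (0, 0))"
    by (simp add: m gsmul_eq vsmul_multiple_of_modulus)
  then show "x = y"
    using gadd_gneg_eq_zeroD \<open>x \<in> A\<close> \<open>y \<in> A\<close> assms(4) by blast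
qed

lemma sumset_cyc_eq_Grp:
  assumes "prime p" "prime q" "p \<noteq> q" "A \<subseteq> Grp p q"
    and "a \<in> {..<p} \<times> {..<p}" "a \<noteq> (0, 0)" "b \<in> {..<q} \<times> {..<q}" "b \<noteq> (0, 0)"
    and "coset_label p q a b ` A = {0..<int p} \<times> {0..<int q}"
  shows "sumset p q A (cyc p q (a, b)) = Grp p q"
proof
  have "0 < p" "0 < q"
    using assms(1,2) prime_gt_0_nat by auto
  then show "sumset p q A (cyc p q (a, b)) \<subseteq> Grp p q"
    by (auto simp: sumset_def gadd_in_Grp)
  show "Grp p q \<subseteq> sumset p q A (cyc p q (a, b))"
  proof
    fix g assume "g \<in> Grp p q"
    obtain x where "x \<in> A" and label: "coset_label p q a b g = coset_label p q a b x"
      using assms(9) coset_label_range[OF \<open>0 < p\<close> \<open>0 < q\<close>] by (metis imageE)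
    then have "gadd p q g (gneg p q x) \<in> cyc p q (a, b)"
      using coset_label_eq_imp_diff_in_cyc[OF assms(1-3,5-8) \<open>g \<in> Grp p q\<close> _ label] assms(4) by blast
    moreover have "g = gadd p q x (gadd p q g (gneg p q x))"
      using gadd_gadd_gneg[of x p q g] \<open>x \<in> A\<close> \<open>g \<in> Grp p q\<close> assms(4) by auto
    ultimately show "g \<in> sumset p q A (cyc p q (a, b))"
      using \<open>x \<in> A\<close> unfolding sumset_def by blast
  qed
qed

theorem lemma4p1:
  fixes p q :: nat and A :: "gelem set"
  assumes "prime p" and "prime q" and "p \<noteq> q"
    and "A \<subseteq> Grp p q" and "card A \<ge> p * q"
  shows "(is_tile p q A \<and> card A = p * q) \<or>
    (\<forall>a b. (a, b) \<in> Grp p q \<and> a \<noteq> (0, 0) \<and> b \<noteq> (0, 0) \<longrightarrow>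
       (a, (0, 0)) \<in> Dirs p q A \<or> ((0, 0), b) \<in> Dirs p q A \<or> (a, b) \<in> Dirs p q A)"
proof (rule disjCI)
  assume "\<not> (\<forall>a b. (a, b) \<in> Grp p q \<and> a \<noteq> (0, 0) \<and> b \<noteq> (0, 0) \<longrightarrow>
       (a, (0, 0)) \<in> Dirs p q A \<or> ((0, 0), b) \<in> Dirs p q A \<or> (a, b) \<in> Dirs p q A)"
  then obtain a b where "(a, b) \<in> Grp p q" and a0: "a \<noteq> (0, 0)" and b0: "b \<noteq> (0, 0)"
    and no_dirs: "(a, (0, 0)) \<notin> Dirs p q A" "((0, 0), b) \<notin> Dirs p q A" "(a, b) \<notin> Dirs p q A"
    by blast
  then have a: "a \<in> {..<p} \<times> {..<p}" and b: "b \<in> {..<q} \<times> {..<q}"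
    by (simp_all add: Grp_eq)
  have inj: "inj_on (coset_label p q a b) A"
    using inj_on_coset_label[OF assms(1-4) a a0 b b0 no_dirs] .
  let ?L = "{0..<int p} \<times> {0..<int q}"
  have into: "coset_label p q a b ` A \<subseteq> ?L"
    using coset_label_range assms(1,2) prime_gt_0_nat by blast
  have card_L: "card ?L = p * q"
    by simp
  then have card_A: "card A = p * q"
    using card_inj_on_le[OF inj into] assms(5) by simp
  then have "coset_label p q a b ` A = ?L"
    using card_subset_eq[OF _ into] card_image[OF inj] card_L by simp
  then have "sumset p q A (cyc p q (a, b)) = Grp p q"
    by (rule sumset_cyc_eq_Grp[OF assms(1-4) a a0 b b0])
  moreover have "cyc p q (a, b) \<subseteq> Grp p q"
    using cyc_subset_Grp assms(1,2) prime_gt_0_nat by blast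
  moreover have "card (cyc p q (a, b)) = p * q"
    by (rule card_cyc[OF assms(1-3) a a0 b b0])
  moreover have "card (Grp p q) = (p * q) * (p * q)"
    by (simp add: Grp_eq card_cartesian_product)
  ultimately show "is_tile p q A \<and> card A = p * q"
    unfolding is_tile_def using card_A by auto
qed

end
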